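(* Let $d\ge 1$, $\eta>0$, $\sigma>1$, $\alpha\ge 1$, and $0<\epsilon<\eta$. Consider the distribution $\mathcal{D}$ on $\mathbb{R}^d\times\{-1,+1\}$: $y$ uniform on $\{-1,+1\}$, $\bm{\mu}=(\eta,\dots,\eta)$, $\bm{x}\mid y=+1\sim\mathcal{N}(\bm{\mu},\sigma^2 I)$, $\bm{x}\mid y=-1\sim\mathcal{N}(-\alpha\bm{\mu},I)$. Consider linear classifiers $f(\bm{x})=\operatorname{sign}(\bm{w}^\top\bm{x}+b)$ with $\|\bm{w}\|_2=1$, $b\in\mathbb{R}$; let $\mathcal{R}_{nat}(f\mid y)=\Pr(f(\bm{x})\neq y\mid y)$ and $\mathcal{R}_{rob}(f\mid y)=\Pr(\exists\bm{\delta},\|\bm{\delta}\|_\infty\le\epsilon: f(\bm{x}+\bm{\delta})\neq y\mid y)$, and let $f_{nat}$, $f_{rob}$ be minimizers over $(\bm{w},b)$ of the total standard error $\Pr(f(\bm{x})\ne y)$ and the total robust error, respectively. For a classifier $f$ and an error notion $\mathcal{R}$ define the disparity $D(\mathcal{R}(f))=\mathcal{R}(f\mid +1)-\mathcal{R}(f\mid -1)$. Let $A=\frac{2\sqrt{d}\sigma}{\sigma^2-1}$ and $h(\sigma)=\frac{2\sigma^2\log\sigma}{\sigma^2-1}$. Then, both for $(\mathcal{R},f)=(\mathcal{R}_{nat},f_{nat})$ with $g(\alpha)=\frac{1+\alpha}{2}\eta$ and for $(\mathcal{R},f)=(\mathcal{R}_{rob},f_{rob})$ with $g(\alpha)=\frac{1+\alpha}{2}\eta-\epsilon$,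 $$D(\mathcal{R}(f))=\Pr\Big(\tfrac{A}{\sigma}g(\alpha)-\sqrt{A^2g^2(\alpha)+h(\sigma)}<\mathcal{N}(0,1)<-Ag(\alpha)+\sqrt{\big(\tfrac{A}{\sigma}\big)^2g^2(\alpha)+\tfrac{h(\sigma)}{\sigma^2}}\Big),$$ and this disparity decreases monotonically as $\alpha$ increases.
   Context: $\Pr(a<\mathcal{N}(0,1)<b)$ denotes the probability that a standard normal variable lies in $(a,b)$. $I$ is the $d\times d$ identity matrix. *)

theory Defs
  imports "HOL-Analysis.Analysis" "HOL-Probability.Probability"
begin

definition gauss_iso :: "real^'d \<Rightarrow> real \<Rightarrow> (real^'d) measure" where
  "gauss_iso m s = density lborel (\<lambda>x. ennreal (\<Prod>i\<in>UNIV. normal_density (m $ i) s (x $ i)))"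

definition std_normal :: "real measure" where
  "std_normal = density lborel (\<lambda>x. ennreal (std_normal_density x))"

definition cond_dist :: "real \<Rightarrow> real \<Rightarrow> real \<Rightarrow> real \<Rightarrow> (real^'d) measure" where
  "cond_dist \<eta> \<sigma> \<alpha> y =
     (if y = 1 then gauss_iso (\<chi> i. \<eta>) \<sigma> else gauss_iso (\<chi> i. - \<alpha> * \<eta>) 1)"

definition lin_clf :: "real^'d \<Rightarrow> real \<Rightarrow> real^'d \<Rightarrow> real" where
  "lin_clf w b x = sgn (w \<bullet> x + b)"

definition nat_err :: "real \<Rightarrow> real \<Rightarrow> real \<Rightarrow> real^'d \<Rightarrow> real \<Rightarrow> real \<Rightarrow> real" where
  "nat_err \<eta> \<sigma> \<alpha> w b y = measure (cond_dist \<eta> \<sigma> \<alpha> y) {x. lin_clf w b x \<noteq> y}"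

definition rob_err :: "real \<Rightarrow> real \<Rightarrow> real \<Rightarrow> real \<Rightarrow> real^'d \<Rightarrow> real \<Rightarrow> real \<Rightarrow> real" where
  "rob_err \<epsilon> \<eta> \<sigma> \<alpha> w b y = measure (cond_dist \<eta> \<sigma> \<alpha> y)
      {x. \<exists>\<delta>::real^'d. infnorm \<delta> \<le> \<epsilon> \<and> lin_clf w b (x + \<delta>) \<noteq> y}"

definition total_err :: "(real^'d \<Rightarrow> real \<Rightarrow> real \<Rightarrow> real) \<Rightarrow> real^'d \<Rightarrow> real \<Rightarrow> real" where
  "total_err R w b = (1/2) * R w b 1 + (1/2) * R w b (-1)"

definition is_minimizer :: "(real^'d \<Rightarrow> real \<Rightarrow> real \<Rightarrow> real) \<Rightarrow> real^'d \<Rightarrow> real \<Rightarrow> bool" where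
  "is_minimizer R w b \<longleftrightarrow> norm w = 1 \<and>
     (\<forall>w' b'. norm w' = 1 \<longrightarrow> total_err R w b \<le> total_err R w' b')"

definition disparity :: "(real^'d \<Rightarrow> real \<Rightarrow> real \<Rightarrow> real) \<Rightarrow> real^'d \<Rightarrow> real \<Rightarrow> real" where
  "disparity R w b = R w b 1 - R w b (-1)"

definition disp_formula :: "nat \<Rightarrow> real \<Rightarrow> real \<Rightarrow> real" where
  "disp_formula d \<sigma> g =
    (let A = 2 * sqrt (real d) * \<sigma> / (\<sigma>\<^sup>2 - 1);
         h = 2 * \<sigma>\<^sup>2 * ln \<sigma> / (\<sigma>\<^sup>2 - 1)
     in measure std_normal
          {(A / \<sigma>) * g - sqrt (A\<^sup>2 * g\<^sup>2 + h) <..<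
           - A * g + sqrt ((A / \<sigma>)\<^sup>2 * g\<^sup>2 + h / \<sigma>\<^sup>2)})"

end

theory Submission
  imports Defs
begin

text \<open>
  Projected onto a unit vector \<open>w\<close>, both class-conditional Gaussians become one-dimensional
  normals, so the two class errors of \<open>sign (w \<bullet> x + b)\<close> are \<open>Phi ((- b - P w) / \<sigma>)\<close> and
  \<open>Phi (b - Q w)\<close> with margins \<open>P w = \<eta> \<Sigma>w\<^sub>i - \<epsilon> \<parallel>w\<parallel>\<^sub>1\<close> and \<open>Q w = \<alpha> \<eta> \<Sigma>w\<^sub>i - \<epsilon> \<parallel>w\<parallel>\<^sub>1\<close>:
  the worst \<open>l\<^sub>\<infinity>\<close> perturbation moves \<open>w \<bullet> x\<close> by exactly \<open>\<epsilon> \<parallel>w\<parallel>\<^sub>1\<close>, and the standard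
  error is the case \<open>\<epsilon> = 0\<close>. By Cauchy-Schwarz both margins are maximal at the diagonal
  direction \<open>(1,...,1)/\<surd>d\<close>, and since \<open>Phi\<close> is strictly increasing every minimiser attains
  both maxima. What remains is the threshold problem
  \<open>min\<^sub>b Phi ((- b - p) / \<sigma>) + Phi (b - q)\<close>: the ratio of the two Gaussian densities in its
  derivative is the exponential of a quadratic in \<open>b\<close>, and the root at which the derivative
  changes sign from negative to positive is the minimiser, giving the closed form of the
  disparity as a function of \<open>c = A g(\<alpha>)\<close>. Its derivative in \<open>c\<close> is negative, and \<open>g\<close> increases
  with \<open>\<alpha>\<close>.
\<close>

section \<open>The standard normal distribution function\<close>

abbreviation Phi :: "real \<Rightarrow> real" where
  "Phi \<equiv> cdf std_normal"

lemma real_distribution_std_normal: "real_distribution std_normal"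
  unfolding real_distribution_def real_distribution_axioms_def std_normal_def
  by (auto intro: prob_space_normal_density)

interpretation std_normal: real_distribution std_normal
  by (rule real_distribution_std_normal)

lemma continuous_on_std_normal_density: "continuous_on S std_normal_density"
  unfolding normal_density_def by (intro continuous_intros) auto

lemma std_normal_density_pos: "0 < std_normal_density x"
  by (rule normal_density_pos) simp

lemma measure_std_normal_Ioc:
  assumes "a \<le> b"
  shows "measure std_normal {a<..b} = integral {a..b} std_normal_density"
proof -
  have Icc_eq: "(\<integral>\<^sup>+x\<in>{a..b}. ennreal (std_normal_density x) \<partial>lborel) = emeasure std_normal {a..b}"
    unfolding std_normal_def by (subst emeasure_density) (auto simp: mult.commute)
  have "emeasure std_normal {a<..b} = emeasure std_normal {a..b}"
  proof (rule emeasure_eq_AE)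
    have "AE x in lborel. x \<noteq> a" by (rule AE_lborel_singleton)
    then show "AE x in std_normal. x \<in> {a<..b} \<longleftrightarrow> x \<in> {a..b}"
      unfolding std_normal_def by (subst AE_density) (auto elim!: eventually_mono)
  qed auto
  also have "\<dots> = ennreal (integral {a..b} std_normal_density)"
    unfolding Icc_eq[symmetric]
    by (rule set_nn_integral_lborel_eq_integral)
       (auto simp: set_borel_measurable_def Icc_eq std_normal.emeasure_finite less_top[symmetric])
  finally show ?thesis
    by (simp add: measure_def integral_nonneg continuous_on_std_normal_density
                  integrable_continuous_interval)
qed

lemma Phi_has_real_derivative: "(Phi has_real_derivative std_normal_density x) (at x)"
proof -
  let ?a = "x - 1" and ?b = "x + 1"
  let ?F = "\<lambda>u. Phi ?a + integral {?a..u} std_normal_density"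
  have F_eq: "?F u = Phi u" if "?a \<le> u" for u
  proof (cases "?a = u")
    case False
    with that have "?a < u" by simp
    then show ?thesis
      using std_normal.cdf_diff_eq[of ?a u] measure_std_normal_Ioc[of ?a u] by simp
  qed simp
  have "(?F has_real_derivative 0 + std_normal_density x) (at x within {?a..?b})"
    by (intro DERIV_add DERIV_const integral_has_real_derivative continuous_on_std_normal_density) simp
  then have "(?F has_real_derivative std_normal_density x) (at x)"
    using at_within_Icc_at[of ?a x ?b] by simp
  then show ?thesis
  proof (rule has_field_derivative_transform_within_open)
    show "?F u = Phi u" if "u \<in> {?a<..<?b}" for u
      by (rule F_eq) (use that in simp)
  qed simp_all
qed

lemma Phi_chain [derivative_intros]:
  "(f has_real_derivative f') (at x within S) \<Longrightarrow>
   ((\<lambda>x. Phi (f x)) has_real_derivative std_normal_density (f x) * f') (at x within S)"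
  by (rule DERIV_chain2[OF Phi_has_real_derivative])

lemma Phi_strict_mono: "strict_mono Phi"
proof (rule strict_monoI)
  show "Phi a < Phi b" if "a < b" for a b
    using that by (rule DERIV_pos_imp_increasing) (metis Phi_has_real_derivative std_normal_density_pos)
qed

lemma Phi_less_iff [simp]: "Phi a < Phi b \<longleftrightarrow> a < b"
  by (rule strict_mono_less[OF Phi_strict_mono])

lemma Phi_le_iff [simp]: "Phi a \<le> Phi b \<longleftrightarrow> a \<le> b"
  by (rule strict_mono_less_eq[OF Phi_strict_mono])

lemma measure_std_normal_Ioo:
  assumes "a < b"
  shows "measure std_normal {a<..<b} = Phi b - Phi a"
proof -
  have "measure std_normal {b} = 0"
    using std_normal.isCont_cdf DERIV_isCont[OF Phi_has_real_derivative] by blast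
  moreover have "{a<..b} = {a<..<b} \<union> {b}"
    using assms by auto
  ultimately have "measure std_normal {a<..b} = measure std_normal {a<..<b}"
    using std_normal.finite_measure_Union[of "{a<..<b}" "{b}"] by simp
  then show ?thesis
    using std_normal.cdf_diff_eq[OF assms] by simp
qed

section \<open>Linear functionals of isotropic Gaussians\<close>

lemma (in prob_space) prob_normal_le:
  assumes X: "distributed M lborel X (normal_density \<mu> s)" and s: "0 < s"
  shows "prob {\<omega>\<in>space M. X \<omega> \<le> c} = Phi ((c - \<mu>) / s)"
proof -
  let ?Z = "\<lambda>\<omega>. (X \<omega> - \<mu>) / s"
  have Z: "distributed M lborel ?Z std_normal_density"
    using normal_standard_normal_convert[OF s] X by simp
  then have Z_meas: "?Z \<in> measurable M lborel"
    by (simp add: distributed_def)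
  have "{\<omega>\<in>space M. X \<omega> \<le> c} = ?Z -` {..(c - \<mu>) / s} \<inter> space M"
    using s by (auto simp: divide_right_mono field_simps)
  then have "prob {\<omega>\<in>space M. X \<omega> \<le> c} = measure (distr M lborel ?Z) {..(c - \<mu>) / s}"
    by (simp add: measure_distr[OF Z_meas])
  also have "\<dots> = Phi ((c - \<mu>) / s)"
    using distributed_distr_eq_density[OF Z] by (simp add: cdf_def std_normal_def)
  finally show ?thesis .
qed

lemma (in prob_space) prob_normal_ge:
  assumes X: "distributed M lborel X (normal_density \<mu> s)" and s: "0 < s"
  shows "prob {\<omega>\<in>space M. c \<le> X \<omega>} = Phi ((\<mu> - c) / s)"
proof -
  have "distributed M lborel (\<lambda>\<omega>. 0 + (-1) * X \<omega>) (normal_density (0 + (-1) * \<mu>) (\<bar>-1\<bar> * s))"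
    by (rule normal_density_affine[OF X s]) simp
  then have "distributed M lborel (\<lambda>\<omega>. - X \<omega>) (normal_density (- \<mu>) s)"
    by simp
  from prob_normal_le[OF this s, of "- c"] show ?thesis
    by (simp add: field_simps)
qed

lemma density_PiM_prod:
  fixes g :: "'i \<Rightarrow> real \<Rightarrow> ennreal"
  assumes I: "finite I" and [measurable]: "\<And>i. g i \<in> borel_measurable borel"
    and sigma_finite: "\<And>i. sigma_finite_measure (density lborel (g i))"
  shows "density (PiM I (\<lambda>_. lborel)) (\<lambda>x. \<Prod>i\<in>I. g i (x i)) = PiM I (\<lambda>i. density lborel (g i))"
proof -
  interpret G: product_sigma_finite "\<lambda>i. density lborel (g i)"
    unfolding product_sigma_finite_def using sigma_finite by auto
  interpret L: product_sigma_finite "\<lambda>_::'i. lborel :: real measure"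
    unfolding product_sigma_finite_def using sigma_finite_lborel by auto
  show ?thesis
  proof (rule G.PiM_eqI[OF I])
    show "sets (density (PiM I (\<lambda>_. lborel)) (\<lambda>x. \<Prod>i\<in>I. g i (x i))) = sets (PiM I (\<lambda>i. density lborel (g i)))"
      unfolding sets_density by (rule sets_PiM_cong) simp_all
  next
    fix A assume "\<And>i. i \<in> I \<Longrightarrow> A i \<in> sets (density lborel (g i))"
    then have A: "\<And>i. i \<in> I \<Longrightarrow> A i \<in> sets borel" by simp
    then have "Pi\<^sub>E I A \<in> sets (PiM I (\<lambda>_. lborel))"
      by (intro sets_PiM_I_finite I) auto
    then have "emeasure (density (PiM I (\<lambda>_. lborel)) (\<lambda>x. \<Prod>i\<in>I. g i (x i))) (Pi\<^sub>E I A)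
        = (\<integral>\<^sup>+x. (\<Prod>i\<in>I. g i (x i)) * indicator (Pi\<^sub>E I A) x \<partial>PiM I (\<lambda>_. lborel))"
      by (subst emeasure_density) auto
    also have "\<dots> = (\<integral>\<^sup>+x. (\<Prod>i\<in>I. g i (x i) * indicator (A i) (x i)) \<partial>PiM I (\<lambda>_. lborel))"
    proof (rule nn_integral_cong)
      fix x assume "x \<in> space (PiM I (\<lambda>_. lborel :: real measure))"
      then have "indicator (Pi\<^sub>E I A) x = (\<Prod>i\<in>I. indicator (A i) (x i) :: ennreal)"
        by (auto simp: space_PiM PiE_def Pi_def indicator_def prod_zero_iff I)
      then show "(\<Prod>i\<in>I. g i (x i)) * indicator (Pi\<^sub>E I A) x = (\<Prod>i\<in>I. g i (x i) * indicator (A i) (x i))"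
        by (simp add: prod.distrib)
    qed
    also have "\<dots> = (\<Prod>i\<in>I. \<integral>\<^sup>+y. g i y * indicator (A i) y \<partial>lborel)"
      using A by (subst L.product_nn_integral_prod[OF I]) auto
    also have "\<dots> = (\<Prod>i\<in>I. emeasure (density lborel (g i)) (A i))"
      using A by (intro prod.cong refl) (simp add: emeasure_density)
    finally show "emeasure (density (PiM I (\<lambda>_. lborel)) (\<lambda>x. \<Prod>i\<in>I. g i (x i))) (Pi\<^sub>E I A)
        = (\<Prod>i\<in>I. emeasure (density lborel (g i)) (A i))" .
  qed
qed

lemma indep_vars_PiM_components:
  assumes I: "finite I" "I \<noteq> {}" and M: "\<And>i. i \<in> I \<Longrightarrow> prob_space (M i)"
  shows "prob_space.indep_vars (PiM I M) M (\<lambda>i x. x i) I"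
proof -
  interpret P: prob_space "PiM I M"
    by (rule prob_space_PiM) (use M in auto)
  have component: "distr (PiM I M) (M i) (\<lambda>x. x i) = M i" if "i \<in> I" for i
    by (rule distr_PiM_component) (use M that in auto)
  show ?thesis
  proof (subst P.indep_vars_iff_distr_eq_PiM')
    show "(\<lambda>x. x i) \<in> measurable (PiM I M) (M i)" if "i \<in> I" for i
      using measurable_component_singleton[OF that] .
    have "distr (PiM I M) (PiM I M) (\<lambda>x. \<lambda>i\<in>I. x i) = distr (PiM I M) (PiM I M) (\<lambda>x. x)"
      by (rule distr_cong) (auto simp: space_PiM)
    also have "\<dots> = (\<Pi>\<^sub>M i\<in>I. distr (PiM I M) (M i) (\<lambda>x. x i))"
      by (simp add: component cong: PiM_cong)
    finally show "distr (PiM I M) (PiM I M) (\<lambda>x. \<lambda>i\<in>I. x i) = (\<Pi>\<^sub>M i\<in>I. distr (PiM I M) (M i) (\<lambda>x. x i))" .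
  qed (use I in auto)
qed

lemma distributed_sum_PiM_normal:
  fixes a \<mu> :: "'i \<Rightarrow> real" and I :: "'i set" and s :: real
  defines "M \<equiv> PiM I (\<lambda>i. density lborel (normal_density (\<mu> i) s))"
  assumes I: "finite I" and s: "0 < s" and a: "\<exists>i\<in>I. a i \<noteq> 0"
  shows "distributed M lborel (\<lambda>x. \<Sum>i\<in>I. a i * x i)
           (normal_density (\<Sum>i\<in>I. a i * \<mu> i) (s * sqrt (\<Sum>i\<in>I. (a i)\<^sup>2)))"
proof -
  have ps: "prob_space (density lborel (normal_density (\<mu> i) s))" for i
    by (rule prob_space_normal_density) (use s in simp)
  interpret M: prob_space M
    unfolding M_def by (rule prob_space_PiM) (use ps in auto)
  \<comment> \<open>\<open>sum_indep_normal\<close> needs nondegenerate summands, so drop the zero coefficients\<close>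
  define J where "J = {i\<in>I. a i \<noteq> 0}"
  have J: "finite J" "J \<subseteq> I" "J \<noteq> {}"
    using I a by (auto simp: J_def)
  have component: "distributed M lborel (\<lambda>x. x i) (normal_density (\<mu> i) s)" if "i \<in> I" for i
  proof -
    let ?N = "density lborel (normal_density (\<mu> i) s)"
    have meas: "(\<lambda>x. x i) \<in> measurable M ?N"
      unfolding M_def by (rule measurable_component_singleton[OF that])
    have "distr M lborel (\<lambda>x. x i) = distr M ?N (\<lambda>x. x i)"
      by (rule distr_cong) auto
    also have "\<dots> = ?N"
      unfolding M_def by (rule distr_PiM_component) (use ps that I in auto)
    finally show ?thesis
      using meas measurable_cong_sets[OF refl sets_density, of M lborel]
      unfolding distributed_def by auto
  qed
  have "M.indep_vars (\<lambda>i. density lborel (normal_density (\<mu> i) s)) (\<lambda>i x. x i) I"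
    unfolding M_def by (rule indep_vars_PiM_components) (use I a ps in auto)
  then have "M.indep_vars (\<lambda>_. borel) (\<lambda>i x. a i * x i) J"
    by (intro M.indep_vars_subset[OF M.indep_vars_compose2 J(2)]) auto
  moreover have "distributed M lborel (\<lambda>x. a i * x i) (normal_density (a i * \<mu> i) (\<bar>a i\<bar> * s))"
    if "i \<in> J" for i
    using M.normal_density_affine[OF component[of i] s, of "a i" 0] that by (auto simp: J_def)
  ultimately have "distributed M lborel (\<lambda>x. \<Sum>i\<in>J. a i * x i)
      (normal_density (\<Sum>i\<in>J. a i * \<mu> i) (sqrt (\<Sum>i\<in>J. (\<bar>a i\<bar> * s)\<^sup>2)))"
    using s by (intro M.sum_indep_normal J) (auto simp: J_def)
  moreover have "(\<Sum>i\<in>J. a i * f i) = (\<Sum>i\<in>I. a i * f i)" for f :: "'i \<Rightarrow> real"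
    by (rule sum.mono_neutral_left) (auto simp: J_def I)
  moreover have "(\<Sum>i\<in>J. (\<bar>a i\<bar> * s)\<^sup>2) = s\<^sup>2 * (\<Sum>i\<in>I. (a i)\<^sup>2)"
  proof -
    have "(\<Sum>i\<in>J. (\<bar>a i\<bar> * s)\<^sup>2) = s\<^sup>2 * (\<Sum>i\<in>J. (a i)\<^sup>2)"
      by (simp add: power_mult_distrib sum_distrib_left mult.commute)
    also have "(\<Sum>i\<in>J. (a i)\<^sup>2) = (\<Sum>i\<in>I. (a i)\<^sup>2)"
      by (rule sum.mono_neutral_left) (auto simp: J_def I)
    finally show ?thesis .
  qed
  ultimately show ?thesis
    using s by (simp add: real_sqrt_mult)
qed

lemma inner_sum_Basis_scaleR:
  fixes f :: "'a::euclidean_space \<Rightarrow> real"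
  assumes "c \<in> Basis"
  shows "(\<Sum>b\<in>Basis. f b *\<^sub>R b) \<bullet> c = f c"
  using assms by (simp add: inner_sum_left inner_Basis if_distrib[of "(*) _"] cong: if_cong)

lemma prod_UNIV_axis_eq_prod_Basis:
  "(\<Prod>i\<in>UNIV. F (axis i (1::real))) = (\<Prod>b\<in>(Basis :: (real^'n) set). F b)"
proof -
  have "(Basis :: (real^'n) set) = (\<lambda>i. axis i 1) ` UNIV"
    by (auto simp: Basis_vec_def)
  moreover have "inj (\<lambda>i::'n. axis i (1::real))"
    by (auto simp: inj_def axis_eq_axis)
  ultimately show ?thesis
    using prod.reindex[of "\<lambda>i. axis i 1" UNIV F] by (simp add: o_def)
qed

lemma gauss_iso_eq_distr_PiM:
  fixes m :: "real^'n"
  assumes s: "0 < s"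
  shows "gauss_iso m s = distr (PiM Basis (\<lambda>b. density lborel (normal_density (m \<bullet> b) s))) borel
                           (\<lambda>f. \<Sum>b\<in>Basis. f b *\<^sub>R b)"
proof -
  let ?T = "\<lambda>f. \<Sum>b\<in>(Basis::(real^'n) set). f b *\<^sub>R b"
  let ?g = "\<lambda>x::real^'n. ennreal (\<Prod>i\<in>UNIV. normal_density (m $ i) s (x $ i))"
  have "gauss_iso m s = density (distr (PiM Basis (\<lambda>b. lborel)) borel ?T) ?g"
    unfolding gauss_iso_def by (subst lborel_eq[where 'a="real^'n"]) simp
  also have "\<dots> = distr (density (PiM Basis (\<lambda>b. lborel)) (\<lambda>x. ?g (?T x))) borel ?T"
    by (rule density_distr) measurable
  also have "(\<lambda>x. ?g (?T x)) = (\<lambda>x. \<Prod>b\<in>Basis. ennreal (normal_density (m \<bullet> b) s (x b)))"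
  proof
    fix x :: "real^'n \<Rightarrow> real"
    have "?T x $ i = x (axis i 1)" for i
      using inner_sum_Basis_scaleR[of "axis i 1"] by (simp add: cart_eq_inner_axis)
    then have "?g (?T x) = ennreal (\<Prod>i\<in>UNIV. normal_density (m \<bullet> axis i 1) s (x (axis i 1)))"
      by (simp add: cart_eq_inner_axis)
    also have "\<dots> = ennreal (\<Prod>b\<in>Basis. normal_density (m \<bullet> b) s (x b))"
      by (subst prod_UNIV_axis_eq_prod_Basis[where F = "\<lambda>b. normal_density (m \<bullet> b) s (x b)"]) rule
    finally show "?g (?T x) = (\<Prod>b\<in>Basis. ennreal (normal_density (m \<bullet> b) s (x b)))"
      by (simp add: prod_ennreal)
  qed
  also have "density (PiM Basis (\<lambda>b. lborel)) (\<lambda>x. \<Prod>b\<in>Basis. ennreal (normal_density (m \<bullet> b) s (x b)))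
      = PiM Basis (\<lambda>b. density lborel (normal_density (m \<bullet> b) s))"
    by (rule density_PiM_prod) (auto intro: prob_space_imp_sigma_finite prob_space_normal_density s)
  finally show ?thesis .
qed

lemma distributed_inner_gauss_iso:
  fixes m w :: "real^'n"
  assumes s: "0 < s" and w: "w \<noteq> 0"
  shows "distributed (gauss_iso m s) lborel (\<lambda>x. w \<bullet> x) (normal_density (w \<bullet> m) (s * norm w))"
proof -
  let ?N = "\<lambda>b. density lborel (normal_density (m \<bullet> b) s)"
  let ?Q = "PiM Basis ?N"
  let ?T = "\<lambda>f. \<Sum>b\<in>(Basis::(real^'n) set). f b *\<^sub>R b"
  have "\<exists>b\<in>Basis. w \<bullet> b \<noteq> 0"
    using w euclidean_all_zero_iff by blast
  then have "distributed ?Q lborel (\<lambda>f. \<Sum>b\<in>Basis. (w \<bullet> b) * f b)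
      (normal_density (\<Sum>b\<in>Basis. (w \<bullet> b) * (m \<bullet> b)) (s * sqrt (\<Sum>b\<in>Basis. (w \<bullet> b)\<^sup>2)))"
    by (intro distributed_sum_PiM_normal s) auto
  moreover have "(\<Sum>b\<in>Basis. (w \<bullet> b) * (m \<bullet> b)) = w \<bullet> m"
    by (simp add: euclidean_inner[of w m])
  moreover have "sqrt (\<Sum>b\<in>Basis. (w \<bullet> b)\<^sup>2) = norm w"
    by (simp add: norm_eq_sqrt_inner euclidean_inner[of w w] power2_eq_square)
  moreover have "w \<bullet> ?T f = (\<Sum>b\<in>Basis. (w \<bullet> b) * f b)" for f
    by (simp add: inner_sum_right mult.commute)
  ultimately have Q: "distributed ?Q lborel (\<lambda>f. w \<bullet> ?T f) (normal_density (w \<bullet> m) (s * norm w))"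
    by (simp only:)
  have "(\<lambda>f. f b) \<in> borel_measurable ?Q" if "b \<in> Basis" for b
    using measurable_component_singleton[OF that, of ?N] measurable_cong_sets[OF refl sets_density, of ?Q lborel]
    by simp
  then have T: "?T \<in> measurable ?Q borel"
    by (auto intro!: borel_measurable_sum borel_measurable_scaleR)
  have "distr (gauss_iso m s) lborel (\<lambda>x. w \<bullet> x) = distr ?Q lborel (\<lambda>f. w \<bullet> ?T f)"
    unfolding gauss_iso_eq_distr_PiM[OF s] by (subst distr_distr[OF _ T]) (auto simp: comp_def)
  with Q show ?thesis
    unfolding distributed_def gauss_iso_eq_distr_PiM[OF s] by simp
qed

lemma prob_space_gauss_iso: "0 < s \<Longrightarrow> prob_space (gauss_iso m s)"
  unfolding gauss_iso_eq_distr_PiM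
  by (intro prob_space.prob_space_distr prob_space_PiM prob_space_normal_density) auto

lemma space_gauss_iso [simp]: "space (gauss_iso m s) = UNIV"
  by (simp add: gauss_iso_def)

lemma distributed_inner_gauss_iso_unit:
  fixes m w :: "real^'n"
  assumes "0 < s" and "norm w = 1"
  shows "distributed (gauss_iso m s) lborel (\<lambda>x. w \<bullet> x) (normal_density (w \<bullet> m) s)"
proof -
  have "w \<noteq> 0"
    using assms(2) by auto
  then show ?thesis
    using distributed_inner_gauss_iso[of s w m] assms by simp
qed

lemma measure_gauss_iso_inner_le:
  fixes m w :: "real^'n"
  assumes s: "0 < s" and w: "norm w = 1"
  shows "measure (gauss_iso m s) {x. w \<bullet> x \<le> c} = Phi ((c - w \<bullet> m) / s)"
  using prob_space.prob_normal_le[OF prob_space_gauss_iso[OF s] distributed_inner_gauss_iso_unit[OF s w] s]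
  by simp

lemma measure_gauss_iso_inner_ge:
  fixes m w :: "real^'n"
  assumes s: "0 < s" and w: "norm w = 1"
  shows "measure (gauss_iso m s) {x. c \<le> w \<bullet> x} = Phi ((w \<bullet> m - c) / s)"
  using prob_space.prob_normal_ge[OF prob_space_gauss_iso[OF s] distributed_inner_gauss_iso_unit[OF s w] s]
  by simp

section \<open>Errors of linear classifiers\<close>

definition coord_sum :: "real^'n \<Rightarrow> real" where
  "coord_sum w = (\<Sum>i\<in>UNIV. w $ i)"

definition l1_norm :: "real^'n \<Rightarrow> real" where
  "l1_norm w = (\<Sum>i\<in>UNIV. \<bar>w $ i\<bar>)"

lemma inner_const_vec: "w \<bullet> (\<chi> i. c) = c * coord_sum w"
  by (simp add: inner_vec_def coord_sum_def sum_distrib_left mult.commute)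

lemma inner_sgn_vec: "w \<bullet> (\<chi> i. c * sgn (w $ i)) = c * l1_norm w"
  by (simp add: inner_vec_def l1_norm_def sum_distrib_left abs_sgn mult.commute mult.left_commute)

lemma l1_norm_uminus [simp]: "l1_norm (- w) = l1_norm w"
  by (simp add: l1_norm_def)

lemma coord_sum_le_l1_norm: "coord_sum w \<le> l1_norm w"
  unfolding coord_sum_def l1_norm_def by (rule sum_mono) simp

lemma l1_norm_le_sqrt_card: "l1_norm (w :: real^'n) \<le> sqrt (real CARD('n)) * norm w"
proof -
  have "l1_norm w = (\<chi> i. \<bar>w $ i\<bar>) \<bullet> ((\<chi> i. 1) :: real^'n)"
    by (simp add: l1_norm_def inner_vec_def)
  also have "\<dots> \<le> norm (\<chi> i. \<bar>w $ i\<bar>) * norm ((\<chi> i. 1) :: real^'n)"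
    by (rule norm_cauchy_schwarz)
  also have "norm (\<chi> i. \<bar>w $ i\<bar>) = norm w"
    by (simp add: norm_vec_def)
  also have "norm ((\<chi> i. 1) :: real^'n) = sqrt (real CARD('n))"
    by (simp add: norm_vec_def L2_set_def)
  finally show ?thesis
    by (simp add: mult.commute)
qed

lemma abs_inner_le_l1_norm_infnorm: "\<bar>w \<bullet> \<delta>\<bar> \<le> l1_norm w * infnorm (\<delta> :: real^'n)"
proof -
  have "\<bar>w \<bullet> \<delta>\<bar> \<le> (\<Sum>i\<in>UNIV. \<bar>w $ i * \<delta> $ i\<bar>)"
    unfolding inner_vec_def inner_real_def by (rule sum_abs)
  also have "\<dots> \<le> (\<Sum>i\<in>UNIV. \<bar>w $ i\<bar> * infnorm \<delta>)"
    by (intro sum_mono) (simp add: abs_mult mult_left_mono component_le_infnorm_cart)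
  finally show ?thesis
    by (simp add: l1_norm_def sum_distrib_right)
qed

lemma infnorm_sgn_vec_le: "0 \<le> c \<Longrightarrow> infnorm (\<chi> i. c * sgn (w $ i)) \<le> c"
  unfolding infnorm_cart by (rule cSup_least) (auto simp: abs_mult abs_sgn_eq)

definition diag_unit :: "real^'n" where
  "diag_unit = (\<chi> i. 1 / sqrt (real CARD('n)))"

lemma
  shows norm_diag_unit: "norm (diag_unit :: real^'n) = 1"
    and coord_sum_diag_unit: "coord_sum (diag_unit :: real^'n) = sqrt (real CARD('n))"
    and l1_norm_diag_unit: "l1_norm (diag_unit :: real^'n) = sqrt (real CARD('n))"
proof -
  have n: "0 < real CARD('n)"
    by simp
  have "(diag_unit :: real^'n) \<bullet> diag_unit = 1"
    using n by (simp add: diag_unit_def inner_vec_def power_divide flip: power2_eq_square)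
  then show "norm (diag_unit :: real^'n) = 1"
    by (simp add: norm_eq_sqrt_inner)
  show "coord_sum (diag_unit :: real^'n) = sqrt (real CARD('n))"
    using n by (simp add: diag_unit_def coord_sum_def real_div_sqrt)
  show "l1_norm (diag_unit :: real^'n) = sqrt (real CARD('n))"
    using n by (simp add: diag_unit_def l1_norm_def real_div_sqrt)
qed

lemma lin_clf_uminus: "lin_clf (- w) (- b) x = - lin_clf w b x"
  by (simp add: lin_clf_def sgn_minus[symmetric] algebra_simps)

lemma robust_misclassified_pos:
  assumes "0 \<le> \<epsilon>"
  shows "{x. \<exists>\<delta>::real^'n. infnorm \<delta> \<le> \<epsilon> \<and> lin_clf w b (x + \<delta>) \<noteq> 1}
           = {x. w \<bullet> x \<le> \<epsilon> * l1_norm w - b}"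
proof safe
  fix x \<delta> :: "real^'n"
  assume "infnorm \<delta> \<le> \<epsilon>" and "lin_clf w b (x + \<delta>) \<noteq> 1"
  then have "w \<bullet> x + w \<bullet> \<delta> + b \<le> 0" and "\<bar>w \<bullet> \<delta>\<bar> \<le> \<epsilon> * l1_norm w"
    using abs_inner_le_l1_norm_infnorm[of w \<delta>] mult_left_mono[of "infnorm \<delta>" \<epsilon> "l1_norm w"]
    by (auto simp: lin_clf_def sgn_if inner_add_right l1_norm_def sum_nonneg mult.commute split: if_splits)
  then show "w \<bullet> x \<le> \<epsilon> * l1_norm w - b"
    by linarith
next
  fix x :: "real^'n"
  assume x: "w \<bullet> x \<le> \<epsilon> * l1_norm w - b"
  let ?\<delta> = "\<chi> i. - \<epsilon> * sgn (w $ i)"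
  have "infnorm ?\<delta> \<le> \<epsilon>"
    using infnorm_sgn_vec_le[OF assms, of "- w"] by (simp add: sgn_minus)
  moreover have "lin_clf w b (x + ?\<delta>) \<noteq> 1"
    using x inner_sgn_vec[of w "- \<epsilon>"] by (simp add: lin_clf_def inner_add_right sgn_if)
  ultimately show "\<exists>\<delta>::real^'n. infnorm \<delta> \<le> \<epsilon> \<and> lin_clf w b (x + \<delta>) \<noteq> 1"
    by blast
qed

lemma robust_misclassified_neg:
  assumes "0 \<le> \<epsilon>"
  shows "{x. \<exists>\<delta>::real^'n. infnorm \<delta> \<le> \<epsilon> \<and> lin_clf w b (x + \<delta>) \<noteq> -1}
           = {x. - b - \<epsilon> * l1_norm w \<le> w \<bullet> x}"
  using robust_misclassified_pos[OF assms, of "- w" "- b"]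
  by (auto simp: lin_clf_uminus)

lemma nat_err_eq_rob_err: "nat_err \<eta> \<sigma> \<alpha> = (rob_err 0 \<eta> \<sigma> \<alpha> :: real^'n \<Rightarrow> real \<Rightarrow> real \<Rightarrow> real)"
proof -
  have "infnorm \<delta> \<le> 0 \<longleftrightarrow> \<delta> = 0" for \<delta> :: "real^'n"
    using infnorm_pos_le[of \<delta>] infnorm_eq_0[of \<delta>] by linarith
  then show ?thesis
    by (intro ext) (simp add: nat_err_def rob_err_def)
qed

lemma rob_err_pos:
  assumes "0 < \<sigma>" and "norm (w::real^'n) = 1" and "0 \<le> \<epsilon>"
  shows "rob_err \<epsilon> \<eta> \<sigma> \<alpha> w b 1 = Phi ((- b - (\<eta> * coord_sum w - \<epsilon> * l1_norm w)) / \<sigma>)"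
  unfolding rob_err_def cond_dist_def robust_misclassified_pos[OF assms(3)]
  using measure_gauss_iso_inner_le[OF assms(1,2), of "\<chi> i. \<eta>" "\<epsilon> * l1_norm w - b"]
  by (simp add: inner_const_vec algebra_simps)

lemma rob_err_neg:
  assumes "norm (w::real^'n) = 1" and "0 \<le> \<epsilon>"
  shows "rob_err \<epsilon> \<eta> \<sigma> \<alpha> w b (-1) = Phi (b - (\<alpha> * \<eta> * coord_sum w - \<epsilon> * l1_norm w))"
  unfolding rob_err_def cond_dist_def robust_misclassified_neg[OF assms(2)]
  using measure_gauss_iso_inner_ge[OF _ assms(1), of 1 "\<chi> i. - \<alpha> * \<eta>" "- b - \<epsilon> * l1_norm w"]
  by (simp add: inner_const_vec algebra_simps)

section \<open>The optimal threshold\<close>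

definition disp_h :: "real \<Rightarrow> real" where
  "disp_h \<sigma> = 2 * \<sigma>\<^sup>2 * ln \<sigma> / (\<sigma>\<^sup>2 - 1)"

definition opt_disparity :: "real \<Rightarrow> real \<Rightarrow> real" where
  "opt_disparity \<sigma> c =
     Phi (- c + sqrt (c\<^sup>2 + disp_h \<sigma>) / \<sigma>) - Phi (c / \<sigma> - sqrt (c\<^sup>2 + disp_h \<sigma>))"

lemma disp_h_pos: "1 < \<sigma> \<Longrightarrow> 0 < disp_h \<sigma>"
  unfolding disp_h_def by (intro divide_pos_pos mult_pos_pos) (auto simp: one_less_power)

lemma abs_less_sqrt_disp_h: "1 < \<sigma> \<Longrightarrow> \<bar>c\<bar> < sqrt (c\<^sup>2 + disp_h \<sigma>)"
  using disp_h_pos[of \<sigma>] by (simp add: real_less_rsqrt)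

lemma sq_sqrt_disp_h: "1 < \<sigma> \<Longrightarrow> (sqrt (c\<^sup>2 + disp_h \<sigma>))\<^sup>2 = c\<^sup>2 + disp_h \<sigma>"
  using disp_h_pos[of \<sigma>] by (simp add: add_nonneg_pos)

lemma std_normal_density_shift: "std_normal_density a = std_normal_density b * exp ((b\<^sup>2 - a\<^sup>2) / 2)"
proof -
  have "exp (- (b\<^sup>2 / 2)) * exp ((b\<^sup>2 - a\<^sup>2) / 2) = exp (- (a\<^sup>2 / 2))"
    by (simp add: exp_add[symmetric] diff_divide_distrib)
  then show ?thesis
    unfolding std_normal_density_def by (simp add: mult.assoc)
qed

lemma exponent_completing_square:
  assumes s: "1 < \<sigma>" and c: "c = \<sigma> * D / (\<sigma>\<^sup>2 - 1)"
  shows "(t\<^sup>2 - ((t + D) / \<sigma>)\<^sup>2) / 2 - ln \<sigma>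
           = (\<sigma>\<^sup>2 - 1) * ((t - c / \<sigma>)\<^sup>2 - (c\<^sup>2 + disp_h \<sigma>)) / (2 * \<sigma>\<^sup>2)"
proof -
  define X where "X = \<sigma>\<^sup>2 - 1"
  have X: "0 < X" and \<sigma>: "0 < \<sigma>"
    using s one_less_power[OF s, of 2] by (auto simp: X_def)
  have "X * ((t - c / \<sigma>)\<^sup>2 - (c\<^sup>2 + disp_h \<sigma>))
          = X * (t - D / X)\<^sup>2 - X * (\<sigma> * D / X)\<^sup>2 - X * disp_h \<sigma>"
    using \<sigma> by (simp add: c X_def right_diff_distrib distrib_left)
  also have "\<dots> = X * t\<^sup>2 - 2 * t * D + (D\<^sup>2 - \<sigma>\<^sup>2 * D\<^sup>2) / X - 2 * \<sigma>\<^sup>2 * ln \<sigma>"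
  proof -
    have "X * (t - D / X)\<^sup>2 = X * t\<^sup>2 - 2 * t * D + D\<^sup>2 / X"
      using X by (simp add: field_simps power2_eq_square)
    moreover have "X * (\<sigma> * D / X)\<^sup>2 = \<sigma>\<^sup>2 * D\<^sup>2 / X"
      using X by (simp add: field_simps power2_eq_square)
    moreover have "X * disp_h \<sigma> = 2 * \<sigma>\<^sup>2 * ln \<sigma>"
      using X by (simp add: X_def disp_h_def)
    ultimately show ?thesis
      by (simp add: diff_divide_distrib)
  qed
  also have "(D\<^sup>2 - \<sigma>\<^sup>2 * D\<^sup>2) / X = - D\<^sup>2"
    using X by (simp add: X_def field_simps)
  finally have "X * ((t - c / \<sigma>)\<^sup>2 - (c\<^sup>2 + disp_h \<sigma>)) = \<sigma>\<^sup>2 * t\<^sup>2 - (t + D)\<^sup>2 - 2 * \<sigma>\<^sup>2 * ln \<sigma>"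
    by (simp add: X_def power2_sum algebra_simps)
  moreover have "(t\<^sup>2 - ((t + D) / \<sigma>)\<^sup>2) / 2 - ln \<sigma> = (\<sigma>\<^sup>2 * t\<^sup>2 - (t + D)\<^sup>2 - 2 * \<sigma>\<^sup>2 * ln \<sigma>) / (2 * \<sigma>\<^sup>2)"
    using \<sigma> by (simp add: field_simps power2_eq_square)
  ultimately show ?thesis
    by (simp add: X_def)
qed

lemma std_normal_density_scaled:
  assumes s: "1 < \<sigma>" and c: "c = \<sigma> * (p + q) / (\<sigma>\<^sup>2 - 1)"
  shows "std_normal_density ((x + p) / \<sigma>) / \<sigma>
           = std_normal_density (x - q) * exp ((\<sigma>\<^sup>2 - 1) * ((x - q - c / \<sigma>)\<^sup>2 - (c\<^sup>2 + disp_h \<sigma>)) / (2 * \<sigma>\<^sup>2))"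
proof -
  let ?t = "x - q"
  have "std_normal_density ((x + p) / \<sigma>) / \<sigma>
          = std_normal_density ?t * exp ((?t\<^sup>2 - ((?t + (p + q)) / \<sigma>)\<^sup>2) / 2) / exp (ln \<sigma>)"
    using s std_normal_density_shift[of "(x + p) / \<sigma>" ?t] by simp
  also have "\<dots> = std_normal_density ?t * exp ((?t\<^sup>2 - ((?t + (p + q)) / \<sigma>)\<^sup>2) / 2 - ln \<sigma>)"
    by (simp add: exp_diff)
  finally show ?thesis
    by (simp only: exponent_completing_square[OF s c])
qed

lemma has_real_derivative_gaussian_pair_risk:
  assumes s: "1 < \<sigma>" and c: "c = \<sigma> * (p + q) / (\<sigma>\<^sup>2 - 1)"
  shows "((\<lambda>x. Phi ((- x - p) / \<sigma>) + Phi (x - q)) has_real_derivative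
           std_normal_density (x - q) *
           (1 - exp ((\<sigma>\<^sup>2 - 1) * ((x - q - c / \<sigma>)\<^sup>2 - (c\<^sup>2 + disp_h \<sigma>)) / (2 * \<sigma>\<^sup>2)))) (at x)"
proof -
  have "((\<lambda>x. Phi ((- x - p) / \<sigma>) + Phi (x - q)) has_real_derivative
          std_normal_density ((- x - p) / \<sigma>) * (- 1 / \<sigma>) + std_normal_density (x - q) * 1) (at x)"
    using s by (auto intro!: derivative_eq_intros)
  moreover have "std_normal_density ((- x - p) / \<sigma>) = std_normal_density ((x + p) / \<sigma>)"
    unfolding std_normal_density_def by (simp add: power2_eq_square field_simps)
  ultimately show ?thesis
    using std_normal_density_scaled[OF s c, of x] by (simp add: right_diff_distrib)
qed

lemma gaussian_pair_risk_argmin: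
  assumes s: "1 < \<sigma>" and c: "c = \<sigma> * (p + q) / (\<sigma>\<^sup>2 - 1)"
    and min: "\<And>b'. Phi ((- b - p) / \<sigma>) + Phi (b - q) \<le> Phi ((- b' - p) / \<sigma>) + Phi (b' - q)"
  shows "b = q + c / \<sigma> - sqrt (c\<^sup>2 + disp_h \<sigma>)"
proof -
  define E where "E x = Phi ((- x - p) / \<sigma>) + Phi (x - q)" for x
  define k where "k = sqrt (c\<^sup>2 + disp_h \<sigma>)"
  define G where "G x = (\<sigma>\<^sup>2 - 1) * ((x - q - c / \<sigma>)\<^sup>2 - k\<^sup>2) / (2 * \<sigma>\<^sup>2)" for x
  have k: "0 < k"
    using abs_less_sqrt_disp_h[OF s, of c] unfolding k_def by linarith
  have X: "0 < \<sigma>\<^sup>2 - 1"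
    using s by (simp add: one_less_power)
  have E': "(E has_real_derivative std_normal_density (x - q) * (1 - exp (G x))) (at x)" for x
    using has_real_derivative_gaussian_pair_risk[OF s c, of x]
    unfolding E_def G_def k_def sq_sqrt_disp_h[OF s] .
  have G_neg: "G x < 0" if "\<bar>x - q - c / \<sigma>\<bar> < k" for x
  proof -
    have "\<bar>x - q - c / \<sigma>\<bar>\<^sup>2 < k\<^sup>2"
      using that by (intro power_strict_mono) auto
    then have "(x - q - c / \<sigma>)\<^sup>2 < k\<^sup>2"
      by simp
    then show ?thesis
      unfolding G_def using X by (intro divide_neg_pos mult_pos_neg) auto
  qed
  have "std_normal_density (b - q) * (1 - exp (G b)) = 0"
    by (rule DERIV_local_min[OF E'[of b], of 1]) (auto simp: min E_def)
  then have "G b = 0"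
    using std_normal_density_pos[of "b - q"] by simp
  then have "(b - q - c / \<sigma>)\<^sup>2 = k\<^sup>2"
    unfolding G_def using X s by simp
  then consider "b - q - c / \<sigma> = k" | "b - q - c / \<sigma> = - k"
    by (auto simp: power2_eq_iff)
  then show ?thesis
  proof cases
    case 1
    \<comment> \<open>this critical point is a local maximum: the risk increases on \<open>(b - 2k, b)\<close>\<close>
    have "E (b - 2 * k) < E b"
    proof (rule DERIV_pos_imp_increasing_open[of "b - 2 * k" b E])
      show "b - 2 * k < b"
        using k by simp
    next
      fix x assume "b - 2 * k < x" "x < b"
      then have "0 < std_normal_density (x - q) * (1 - exp (G x))"
        using 1 G_neg[of x] std_normal_density_pos[of "x - q"] by simp
      then show "\<exists>y. (E has_real_derivative y) (at x) \<and> 0 < y"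
        using E' by blast
    next
      show "continuous_on {b - 2 * k..b} E"
        using E' by (intro continuous_at_imp_continuous_on ballI DERIV_isCont) blast
    qed
    then show ?thesis
      using min[of "b - 2 * k"] unfolding E_def by simp
  next
    case 2
    then show ?thesis
      unfolding k_def by simp
  qed
qed

lemma gaussian_pair_disparity_at_argmin:
  assumes s: "1 < \<sigma>" and c: "c = \<sigma> * (p + q) / (\<sigma>\<^sup>2 - 1)"
    and b: "b = q + c / \<sigma> - sqrt (c\<^sup>2 + disp_h \<sigma>)"
  shows "Phi ((- b - p) / \<sigma>) - Phi (b - q) = opt_disparity \<sigma> c"
proof -
  have \<sigma>: "0 < \<sigma>"
    using s by simp
  have X: "\<sigma>\<^sup>2 - 1 \<noteq> 0"
    using one_less_power[OF s, of 2] by simp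
  have "p + q = c * (\<sigma>\<^sup>2 - 1) / \<sigma>"
    using c X \<sigma> by (simp add: field_simps)
  then have "(- b - p) / \<sigma> = - c + sqrt (c\<^sup>2 + disp_h \<sigma>) / \<sigma>"
    unfolding b using \<sigma> by (simp add: field_simps power2_eq_square)
  then show ?thesis
    unfolding opt_disparity_def b by simp
qed

lemma std_normal_density_disparity_endpoints:
  fixes c \<sigma> :: real
  assumes s: "1 < \<sigma>"
  defines "k \<equiv> sqrt (c\<^sup>2 + disp_h \<sigma>)"
  shows "std_normal_density (c / \<sigma> - k) = std_normal_density (- c + k / \<sigma>) / \<sigma>"
proof -
  have \<sigma>: "0 < \<sigma>"
    using s by simp
  have X: "\<sigma>\<^sup>2 - 1 \<noteq> 0"
    using one_less_power[OF s, of 2] by simp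
  have "(- c + k / \<sigma>)\<^sup>2 - (c / \<sigma> - k)\<^sup>2 = (c\<^sup>2 - k\<^sup>2) * (\<sigma>\<^sup>2 - 1) / \<sigma>\<^sup>2"
    using \<sigma> by (simp add: field_simps power2_eq_square)
  also have "\<dots> = - disp_h \<sigma> * (\<sigma>\<^sup>2 - 1) / \<sigma>\<^sup>2"
    using sq_sqrt_disp_h[OF s, of c] by (simp add: k_def)
  also have "\<dots> = - 2 * ln \<sigma>"
    using X \<sigma> by (simp add: disp_h_def)
  finally have "exp (((- c + k / \<sigma>)\<^sup>2 - (c / \<sigma> - k)\<^sup>2) / 2) = 1 / \<sigma>"
    using \<sigma> by (simp add: exp_minus inverse_eq_divide)
  then show ?thesis
    using std_normal_density_shift[of "c / \<sigma> - k" "- c + k / \<sigma>"] by simp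
qed

lemma opt_disparity_strict_antimono:
  assumes s: "1 < \<sigma>" and "c1 < c2"
  shows "opt_disparity \<sigma> c2 < opt_disparity \<sigma> c1"
proof (rule DERIV_neg_imp_decreasing[OF \<open>c1 < c2\<close>])
  fix c :: real
  define k where "k = sqrt (c\<^sup>2 + disp_h \<sigma>)"
  let ?hi = "- c + k / \<sigma>" and ?lo = "c / \<sigma> - k"
  have \<sigma>: "0 < \<sigma>"
    using s by simp
  have k: "0 < k" "c < k"
    using abs_less_sqrt_disp_h[OF s, of c] unfolding k_def by linarith+
  have k': "((\<lambda>c. sqrt (c\<^sup>2 + disp_h \<sigma>)) has_real_derivative c / k) (at c)"
  proof -
    have "0 < c\<^sup>2 + disp_h \<sigma>"
      by (rule add_nonneg_pos) (simp_all add: disp_h_pos[OF s])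
    then show ?thesis
      unfolding k_def by (auto intro!: derivative_eq_intros simp: field_simps)
  qed
  have hi: "((\<lambda>c. - c + sqrt (c\<^sup>2 + disp_h \<sigma>) / \<sigma>) has_real_derivative - 1 + c / k / \<sigma>) (at c)"
    using DERIV_add[OF DERIV_minus[OF DERIV_ident] DERIV_cdivide[OF k', of \<sigma>]] by simp
  have lo: "((\<lambda>c. c / \<sigma> - sqrt (c\<^sup>2 + disp_h \<sigma>)) has_real_derivative 1 / \<sigma> - c / k) (at c)"
    using DERIV_diff[OF DERIV_cdivide[OF DERIV_ident, of \<sigma>] k'] by simp
  have "(opt_disparity \<sigma> has_real_derivative
          std_normal_density ?hi * (- 1 + c / k / \<sigma>) - std_normal_density ?lo * (1 / \<sigma> - c / k)) (at c)"
    unfolding opt_disparity_def using DERIV_diff[OF Phi_chain[OF hi] Phi_chain[OF lo]] by (simp add: k_def)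
  moreover have "std_normal_density ?hi * (- 1 + c / k / \<sigma>) - std_normal_density ?lo * (1 / \<sigma> - c / k)
      = - std_normal_density ?hi * ((1 - 1 / \<sigma>)\<^sup>2 + 2 * (1 - c / k) / \<sigma>)"
    unfolding std_normal_density_disparity_endpoints[OF s, of c, folded k_def] using \<sigma>
    by (simp add: field_simps power2_eq_square)
  moreover have "0 < (1 - 1 / \<sigma>)\<^sup>2 + 2 * (1 - c / k) / \<sigma>"
  proof -
    have "c / k < 1"
      using k by simp
    then show ?thesis
      using \<sigma> by (intro add_nonneg_pos divide_pos_pos) auto
  qed
  ultimately show "\<exists>y. (opt_disparity \<sigma> has_real_derivative y) (at c) \<and> y < 0"
    using std_normal_density_pos[of ?hi] by (metis mult_pos_pos neg_less_0_iff_less mult_minus_left)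
qed

lemma disp_formula_eq_opt_disparity:
  assumes s: "1 < \<sigma>"
  shows "disp_formula d \<sigma> g = opt_disparity \<sigma> (2 * sqrt (real d) * \<sigma> / (\<sigma>\<^sup>2 - 1) * g)"
proof -
  define A where "A = 2 * sqrt (real d) * \<sigma> / (\<sigma>\<^sup>2 - 1)"
  define c where "c = A * g"
  define k where "k = sqrt (c\<^sup>2 + disp_h \<sigma>)"
  have \<sigma>: "0 < \<sigma>"
    using s by simp
  have "sqrt ((A / \<sigma>)\<^sup>2 * g\<^sup>2 + disp_h \<sigma> / \<sigma>\<^sup>2) = k / \<sigma>"
  proof -
    have "(A / \<sigma>)\<^sup>2 * g\<^sup>2 + disp_h \<sigma> / \<sigma>\<^sup>2 = (c\<^sup>2 + disp_h \<sigma>) / \<sigma>\<^sup>2"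
      unfolding c_def using \<sigma> by (simp add: field_simps power_mult_distrib)
    then show ?thesis
      unfolding k_def using \<sigma> by (simp add: real_sqrt_divide)
  qed
  moreover have "A / \<sigma> * g = c / \<sigma>" and "A\<^sup>2 * g\<^sup>2 = c\<^sup>2"
    unfolding c_def by (simp_all add: power_mult_distrib)
  ultimately have "disp_formula d \<sigma> g = measure std_normal {c / \<sigma> - k <..< - c + k / \<sigma>}"
    unfolding disp_formula_def Let_def A_def[symmetric] disp_h_def[symmetric] k_def
    by (simp add: c_def[symmetric])
  also have "\<dots> = opt_disparity \<sigma> c"
  proof -
    have "c < k"
      using abs_less_sqrt_disp_h[OF s, of c] unfolding k_def by linarith
    moreover have "0 < 1 + 1 / \<sigma>"
      using \<sigma> by (simp add: add_pos_pos)
    ultimately have "0 < (k - c) * (1 + 1 / \<sigma>)"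
      by simp
    then have "c / \<sigma> - k < - c + k / \<sigma>"
      by (simp add: algebra_simps diff_divide_distrib)
    then show ?thesis
      unfolding opt_disparity_def k_def[symmetric] by (rule measure_std_normal_Ioo)
  qed
  finally show ?thesis
    unfolding c_def A_def .
qed

section \<open>Minimisers of the total error\<close>

lemma minimizer_disparity:
  fixes R :: "real^'n \<Rightarrow> real \<Rightarrow> real \<Rightarrow> real" and P Q :: "real^'n \<Rightarrow> real"
  assumes s: "1 < \<sigma>"
    and R_pos: "\<And>w b. norm w = 1 \<Longrightarrow> R w b 1 = Phi ((- b - P w) / \<sigma>)"
    and R_neg: "\<And>w b. norm w = 1 \<Longrightarrow> R w b (-1) = Phi (b - Q w)"
    and u: "norm u = 1" and P_max: "\<And>w. norm w = 1 \<Longrightarrow> P w \<le> P u"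
    and Q_max: "\<And>w. norm w = 1 \<Longrightarrow> Q w \<le> Q u"
    and min: "is_minimizer R w b"
  shows "disparity R w b = opt_disparity \<sigma> (\<sigma> * (P u + Q u) / (\<sigma>\<^sup>2 - 1))"
proof -
  have \<sigma>: "0 < \<sigma>"
    using s by simp
  have w: "norm w = 1" and le: "\<And>w' b'. norm w' = 1 \<Longrightarrow> total_err R w b \<le> total_err R w' b'"
    using min unfolding is_minimizer_def by auto
  have total: "total_err R v b' = (Phi ((- b' - P v) / \<sigma>) + Phi (b' - Q v)) / 2" if "norm v = 1" for v b'
    unfolding total_err_def using R_pos[OF that] R_neg[OF that] by simp
  have PQ: "P w = P u \<and> Q w = Q u"
  proof (rule ccontr)
    assume "\<not> ?thesis"
    then have "P w < P u \<or> Q w < Q u"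
      using P_max[OF w] Q_max[OF w] by auto
    then have "total_err R u b < total_err R w b"
      unfolding total[OF u] total[OF w] using P_max[OF w] Q_max[OF w] \<sigma>
      by (auto simp: divide_right_mono divide_strict_right_mono intro: add_less_le_mono add_le_less_mono)
    with le[OF u, of b] show False
      by simp
  qed
  have "b = Q u + (\<sigma> * (P u + Q u) / (\<sigma>\<^sup>2 - 1)) / \<sigma> - sqrt ((\<sigma> * (P u + Q u) / (\<sigma>\<^sup>2 - 1))\<^sup>2 + disp_h \<sigma>)"
  proof (rule gaussian_pair_risk_argmin[OF s refl])
    show "Phi ((- b - P u) / \<sigma>) + Phi (b - Q u) \<le> Phi ((- b' - P u) / \<sigma>) + Phi (b' - Q u)" for b'
      using le[OF u, of b'] PQ unfolding total[OF u] total[OF w] by simp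
  qed
  then have "Phi ((- b - P u) / \<sigma>) - Phi (b - Q u) = opt_disparity \<sigma> (\<sigma> * (P u + Q u) / (\<sigma>\<^sup>2 - 1))"
    by (rule gaussian_pair_disparity_at_argmin[OF s refl])
  then show ?thesis
    unfolding disparity_def using R_pos[OF w] R_neg[OF w] PQ by simp
qed

lemma margin_le_at_diag_unit:
  fixes w :: "real^'n"
  assumes "0 \<le> \<epsilon>" and "\<epsilon> \<le> a" and "norm w = 1"
  shows "a * coord_sum w - \<epsilon> * l1_norm w
           \<le> a * coord_sum (diag_unit :: real^'n) - \<epsilon> * l1_norm (diag_unit :: real^'n)"
proof -
  have "a * coord_sum w - \<epsilon> * l1_norm w \<le> (a - \<epsilon>) * l1_norm w"
    using coord_sum_le_l1_norm[of w] assms by (simp add: mult_left_mono left_diff_distrib)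
  also have "\<dots> \<le> (a - \<epsilon>) * sqrt (real CARD('n))"
    using l1_norm_le_sqrt_card[of w] assms by (simp add: mult_left_mono)
  finally show ?thesis
    by (simp add: coord_sum_diag_unit l1_norm_diag_unit left_diff_distrib)
qed

lemma rob_err_minimizer_disparity:
  fixes w :: "real^'n"
  assumes \<epsilon>: "0 \<le> \<epsilon>" "\<epsilon> \<le> \<eta>" and s: "1 < \<sigma>" and \<alpha>: "1 \<le> \<alpha>"
    and min: "is_minimizer (rob_err \<epsilon> \<eta> \<sigma> \<alpha>) w b"
  shows "disparity (rob_err \<epsilon> \<eta> \<sigma> \<alpha>) w b = disp_formula CARD('n) \<sigma> ((1 + \<alpha>) / 2 * \<eta> - \<epsilon>)"
proof -
  let ?P = "\<lambda>w::real^'n. \<eta> * coord_sum w - \<epsilon> * l1_norm w"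
  let ?Q = "\<lambda>w::real^'n. \<alpha> * \<eta> * coord_sum w - \<epsilon> * l1_norm w"
  let ?r = "sqrt (real CARD('n))"
  have "\<eta> \<le> \<alpha> * \<eta>"
    using \<alpha> \<epsilon> by (simp add: mult_le_cancel_right1)
  then have P_max: "?P v \<le> ?P diag_unit" and Q_max: "?Q v \<le> ?Q diag_unit" if "norm v = 1" for v
    using margin_le_at_diag_unit[OF _ _ that] \<epsilon> by auto
  have "disparity (rob_err \<epsilon> \<eta> \<sigma> \<alpha>) w b
      = opt_disparity \<sigma> (\<sigma> * (?P diag_unit + ?Q diag_unit) / (\<sigma>\<^sup>2 - 1))"
    using s \<epsilon>(1) by (intro minimizer_disparity[where P = ?P and Q = ?Q, OF s _ _ norm_diag_unit P_max Q_max min])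
                        (simp_all add: rob_err_pos rob_err_neg)
  also have "\<sigma> * (?P diag_unit + ?Q diag_unit) / (\<sigma>\<^sup>2 - 1)
      = 2 * ?r * \<sigma> / (\<sigma>\<^sup>2 - 1) * ((1 + \<alpha>) / 2 * \<eta> - \<epsilon>)"
    using one_less_power[OF s, of 2] by (simp add: coord_sum_diag_unit l1_norm_diag_unit field_simps)
  finally show ?thesis
    using disp_formula_eq_opt_disparity[OF s] by simp
qed

lemma disp_formula_strict_antimono:
  assumes "0 < d" and s: "1 < \<sigma>" and "g1 < g2"
  shows "disp_formula d \<sigma> g2 < disp_formula d \<sigma> g1"
proof -
  have "0 < 2 * sqrt (real d) * \<sigma> / (\<sigma>\<^sup>2 - 1)"
    using assms one_less_power[OF s, of 2] by simp
  then have "2 * sqrt (real d) * \<sigma> / (\<sigma>\<^sup>2 - 1) * g1 < 2 * sqrt (real d) * \<sigma> / (\<sigma>\<^sup>2 - 1) * g2"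
    using \<open>g1 < g2\<close> by (rule mult_strict_left_mono[rotated])
  then show ?thesis
    unfolding disp_formula_eq_opt_disparity[OF s] by (rule opt_disparity_strict_antimono[OF s])
qed

theorem theorem2:
  fixes \<eta> \<sigma> \<epsilon> :: real
  assumes "\<eta> > 0" and "\<sigma> > 1" and "0 < \<epsilon>" and "\<epsilon> < \<eta>"
  shows
    "(\<forall>\<alpha> \<ge> 1. \<forall>(w::real^'d) b. is_minimizer (nat_err \<eta> \<sigma> \<alpha>) w b \<longrightarrow>
        disparity (nat_err \<eta> \<sigma> \<alpha>) w b
          = disp_formula CARD('d) \<sigma> ((1 + \<alpha>) / 2 * \<eta>))
   \<and> (\<forall>\<alpha> \<ge> 1. \<forall>(w::real^'d) b. is_minimizer (rob_err \<epsilon> \<eta> \<sigma> \<alpha>) w b \<longrightarrow>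
        disparity (rob_err \<epsilon> \<eta> \<sigma> \<alpha>) w b
          = disp_formula CARD('d) \<sigma> ((1 + \<alpha>) / 2 * \<eta> - \<epsilon>))
   \<and> (\<forall>\<alpha>1 \<alpha>2 (w1::real^'d) b1 (w2::real^'d) b2.
        1 \<le> \<alpha>1 \<longrightarrow> \<alpha>1 < \<alpha>2 \<longrightarrow>
        is_minimizer (nat_err \<eta> \<sigma> \<alpha>1) w1 b1 \<longrightarrow> is_minimizer (nat_err \<eta> \<sigma> \<alpha>2) w2 b2 \<longrightarrow>
        disparity (nat_err \<eta> \<sigma> \<alpha>2) w2 b2 < disparity (nat_err \<eta> \<sigma> \<alpha>1) w1 b1)
   \<and> (\<forall>\<alpha>1 \<alpha>2 (w1::real^'d) b1 (w2::real^'d) b2.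
        1 \<le> \<alpha>1 \<longrightarrow> \<alpha>1 < \<alpha>2 \<longrightarrow>
        is_minimizer (rob_err \<epsilon> \<eta> \<sigma> \<alpha>1) w1 b1 \<longrightarrow> is_minimizer (rob_err \<epsilon> \<eta> \<sigma> \<alpha>2) w2 b2 \<longrightarrow>
        disparity (rob_err \<epsilon> \<eta> \<sigma> \<alpha>2) w2 b2 < disparity (rob_err \<epsilon> \<eta> \<sigma> \<alpha>1) w1 b1)"
proof -
  have s: "1 < \<sigma>"
    using assms(2) .
  have rob: "disparity (rob_err \<epsilon>' \<eta> \<sigma> \<alpha>) w b = disp_formula CARD('d) \<sigma> ((1 + \<alpha>) / 2 * \<eta> - \<epsilon>')"
    if "0 \<le> \<epsilon>'" "\<epsilon>' \<le> \<eta>" "1 \<le> \<alpha>" "is_minimizer (rob_err \<epsilon>' \<eta> \<sigma> \<alpha>) w b"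
    for \<epsilon>' \<alpha> and w :: "real^'d" and b
    using rob_err_minimizer_disparity[OF that(1,2) s that(3,4)] .
  have nat: "disparity (nat_err \<eta> \<sigma> \<alpha>) w b = disp_formula CARD('d) \<sigma> ((1 + \<alpha>) / 2 * \<eta>)"
    if "1 \<le> \<alpha>" "is_minimizer (nat_err \<eta> \<sigma> \<alpha>) w b" for \<alpha> and w :: "real^'d" and b
    using rob[of 0 \<alpha> w b] that assms(1) by (simp add: nat_err_eq_rob_err)
  have antimono: "disp_formula CARD('d) \<sigma> ((1 + \<alpha>2) / 2 * \<eta> - e) < disp_formula CARD('d) \<sigma> ((1 + \<alpha>1) / 2 * \<eta> - e)"
    if "\<alpha>1 < \<alpha>2" for \<alpha>1 \<alpha>2 e
    using that assms(1) by (intro disp_formula_strict_antimono[OF _ s]) (simp_all add: divide_strict_right_mono)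
  show ?thesis
  proof (intro conjI allI impI)
    fix \<alpha>1 \<alpha>2 :: real and w1 w2 :: "real^'d" and b1 b2
    assume "1 \<le> \<alpha>1" "\<alpha>1 < \<alpha>2"
    then show "is_minimizer (nat_err \<eta> \<sigma> \<alpha>1) w1 b1 \<Longrightarrow> is_minimizer (nat_err \<eta> \<sigma> \<alpha>2) w2 b2 \<Longrightarrow>
        disparity (nat_err \<eta> \<sigma> \<alpha>2) w2 b2 < disparity (nat_err \<eta> \<sigma> \<alpha>1) w1 b1"
      and "is_minimizer (rob_err \<epsilon> \<eta> \<sigma> \<alpha>1) w1 b1 \<Longrightarrow> is_minimizer (rob_err \<epsilon> \<eta> \<sigma> \<alpha>2) w2 b2 \<Longrightarrow>
        disparity (rob_err \<epsilon> \<eta> \<sigma> \<alpha>2) w2 b2 < disparity (rob_err \<epsilon> \<eta> \<sigma> \<alpha>1) w1 b1"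
      using nat rob antimono[of \<alpha>1 \<alpha>2 0] antimono[of \<alpha>1 \<alpha>2 \<epsilon>] assms by simp_all
  qed (use nat rob assms in auto)
qed

end
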